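(* Fix $\theta$ with $1<\theta<2$. Let $(A_j)_{j\ge 1}$ be the sequence of subsets of $[0,1]$ defined as follows: $A_1$ is a Cantor set in $[0,1]$ of Lebesgue measure $2^{-1}$, and for each $j\ge 1$, $$A_{j+1}=\bigcup\{(A_1)_I : I \text{ is a hole of a Cantor component of } A_j\}$$ (for $j=1$ the only Cantor component of $A_1$ is $A_1$ itself). Put $f_j=\theta^j\chi_{A_j}$. For each $k\in\mathbb{N}$ let $(n^k_j)_{j\ge1}$ be a strictly increasing sequence of natural numbers, such that the sets $\{n^k_j:j\in\mathbb{N}\}$, $k\in\mathbb{N}$, are pairwise disjoint, and put $g_k=\sum_{j} f_{n^k_j}$. Then each $g_k\in L^1([0,1])$, and the closure in $L^1([0,1])$ of $\mathrm{span}\{g_k:k\in\mathbb{N}\}$ is an infinite-dimensional closed subspace contained in $\mathcal{G}\cup\{0\}$. In particular, $\mathcal{G}$ is spaceable in $L^1([0,1])$.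
   Context: $m$ denotes Lebesgue measure. $\mathcal{G}$ is the set of Lebesgue integrable functions on $[0,1]$ (elements of $L^1([0,1])$) that are nowhere essentially bounded, i.e. not essentially bounded on any nondegenerate subinterval of $[0,1]$. A Cantor set in $[a,b]$ is a perfect, uncountable, nowhere dense subset of $[a,b]$ containing $a$ and $b$ (so of diameter $b-a$), obtained by removing from $[a,b]$ a countable union of pairwise disjoint open intervals; these open intervals (the connected components of $[a,b]\setminus A$) are called the holes of $A$. A nonvoid set $B\subset[a,b]$ is Cantor-built with Cantor components $A_j$ ($j\in\Gamma$) if $B=\bigcup_{j\in\Gamma}A_j$, each $A_j$ is a Cantor set in some subinterval $[c_j,d_j]\subset[a,b]$, and $m([c_j,d_j]\cap[c_k,d_k])=0$ for $j\ne k$. For $A\subset[0,1]$ and an interval $I=[a,b]\subset[0,1]$ (or the closure of an open interval $I=(a,b)$), $A_I=\{(b-a)x+a: x\in A\}$. A subset $S$ of a topological vector space $X$ is spaceable if $S\cup\{0\}$ contains a closed infinite-dimensional vector subspace of $X$. *)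

theory Defs
  imports "HOL-Analysis.Analysis"
begin

definition cantor_set :: "real set \<Rightarrow> real \<Rightarrow> real \<Rightarrow> bool" where
  "cantor_set A a b \<longleftrightarrow> a < b \<and> A \<subseteq> {a..b} \<and> a \<in> A \<and> b \<in> A \<and>
     closed A \<and> (\<forall>x\<in>A. x islimpt A) \<and> uncountable A \<and> interior (closure A) = {}"

definition holes :: "real set \<Rightarrow> real \<Rightarrow> real \<Rightarrow> real set set" where
  "holes A a b = components ({a..b} - A)"

definition rescale :: "real set \<Rightarrow> real \<Rightarrow> real \<Rightarrow> real set" where
  "rescale A a b = (\<lambda>x. (b - a) * x + a) ` A"

text \<open>Endpoints of the intervals carrying the Cantor components of A_(j+1):
  level 0 is [0,1] (component A_1 itself); each next level consists of the closures
  of the holes of the components (A_1)_[c,d] of the previous level.\<close>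
primrec comp_intervals :: "real set \<Rightarrow> nat \<Rightarrow> (real \<times> real) set" where
  "comp_intervals A1 0 = {(0, 1)}"
| "comp_intervals A1 (Suc j) =
     {(Inf I, Sup I) | I c d. (c, d) \<in> comp_intervals A1 j \<and> I \<in> holes (rescale A1 c d) c d}"

definition cantor_seq :: "real set \<Rightarrow> nat \<Rightarrow> real set" where
  "cantor_seq A1 j = (\<Union>(c, d) \<in> comp_intervals A1 (j - 1). rescale A1 c d)"

definition fseq :: "real \<Rightarrow> real set \<Rightarrow> nat \<Rightarrow> real \<Rightarrow> real" where
  "fseq \<theta> A1 j x = \<theta> ^ j * indicator (cantor_seq A1 j) x"

text \<open>g = sum_j f_(n j), pointwise (set to 0 where the series diverges, a null set).\<close>
definition gfun :: "real \<Rightarrow> real set \<Rightarrow> (nat \<Rightarrow> nat) \<Rightarrow> real \<Rightarrow> real" where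
  "gfun \<theta> A1 n x =
     (if summable (\<lambda>j. fseq \<theta> A1 (n j) x) then (\<Sum>j. fseq \<theta> A1 (n j) x) else 0)"

definition L1 :: "(real \<Rightarrow> real) set" where
  "L1 = {h. set_integrable lborel {0..1} h}"

definition L1dist :: "(real \<Rightarrow> real) \<Rightarrow> (real \<Rightarrow> real) \<Rightarrow> real" where
  "L1dist h k = (LINT x:{0..1}|lborel. \<bar>h x - k x\<bar>)"

definition fspan :: "(nat \<Rightarrow> real \<Rightarrow> real) \<Rightarrow> (real \<Rightarrow> real) set" where
  "fspan g = {s. \<exists>N c. s = (\<lambda>x. \<Sum>k<N. c k * g k x)}"

definition L1closure :: "(real \<Rightarrow> real) set \<Rightarrow> (real \<Rightarrow> real) set" where
  "L1closure S = {h \<in> L1. \<exists>s. (\<forall>i. s i \<in> S \<and> s i \<in> L1) \<and> (\<lambda>i. L1dist (s i) h) \<longlonglongrightarrow> 0}"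

definition L1zero :: "(real \<Rightarrow> real) \<Rightarrow> bool" where
  "L1zero h \<longleftrightarrow> (AE x in lborel. x \<in> {0..1} \<longrightarrow> h x = 0)"

definition ess_bounded_on :: "(real \<Rightarrow> real) \<Rightarrow> real \<Rightarrow> real \<Rightarrow> bool" where
  "ess_bounded_on h a b \<longleftrightarrow> (\<exists>M. AE x in lborel. x \<in> {a..b} \<longrightarrow> \<bar>h x\<bar> \<le> M)"

definition Gset :: "(real \<Rightarrow> real) set" where
  "Gset = {h \<in> L1. \<forall>a b. 0 \<le> a \<and> a < b \<and> b \<le> 1 \<longrightarrow> \<not> ess_bounded_on h a b}"

end

theory Submission
  imports Defs
begin

text \<open>The sets \<open>A\<^sub>j\<close> meet only in the countably many endpoints of the intervals carrying
  their Cantor components, \<open>A\<^sub>j\<close> has measure \<open>2\<^sup>-\<^sup>j\<close>, the \<open>A\<^sub>j\<close> cover \<open>[0,1]\<close> up to a null set,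
  and every subinterval of \<open>[0,1]\<close> meets \<open>A\<^sub>j\<close> in positive measure for all large \<open>j\<close>. Hence
  \<open>g\<^sub>k = \<theta>\<^sup>m\<close> a.e. on \<open>A\<^sub>m\<close> when \<open>m\<close> is one of the indices \<open>n\<^sup>k\<^sub>j\<close> and \<open>g\<^sub>k = 0\<close> a.e. on the other
  \<open>A\<^sub>m\<close>; \<open>\<theta> < 2\<close> makes \<open>\<Sum>\<^sub>j (\<theta>/2)\<^sup>j\<close> finite, so \<open>g\<^sub>k \<in> L\<^sup>1\<close>, and a linear combination
  \<open>\<Sum> c\<^sub>k g\<^sub>k\<close> equals \<open>c\<^sub>k \<theta>\<^sup>m\<close> on \<open>A\<^sub>m\<close>, which gives linear independence.

  Now let \<open>h\<close> be an \<open>L\<^sup>1\<close>-limit of combinations \<open>s\<^sub>i\<close> with \<open>|h| \<le> M\<close> a.e. on some \<open>[a,b]\<close>, and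
  let \<open>\<beta>\<^sub>i\<close> be the coefficient of \<open>g\<^sub>k\<close> in \<open>s\<^sub>i\<close>, where \<open>m = n\<^sup>k\<^sub>j\<^sub>0\<close>. On the set of positive measure
  \<open>\<mu>\<close> where \<open>A\<^sub>m\<^sub>'\<close>, \<open>m' = n\<^sup>k\<^sub>j\<close>, meets \<open>[a,b]\<close> we have \<open>s\<^sub>i = \<beta>\<^sub>i \<theta>\<^sup>m\<^sup>'\<close> and \<open>|h| \<le> M\<close>, so
  \<open>(|\<beta>\<^sub>i| \<theta>\<^sup>m\<^sup>' - M) \<mu> \<le> \<parallel>s\<^sub>i - h\<parallel>\<close>; together with \<open>\<integral>\<^bsub>A\<^sub>m\<^esub> |h| \<le> \<parallel>s\<^sub>i - h\<parallel> + |\<beta>\<^sub>i| \<theta>\<^sup>m\<close> this gives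
  \<open>\<integral>\<^bsub>A\<^sub>m\<^esub> |h| \<le> \<theta>\<^sup>m M / \<theta>\<^sup>m\<^sup>'\<close> as \<open>i \<rightarrow> \<infinity>\<close>, and letting \<open>j \<rightarrow> \<infinity>\<close>, \<open>h = 0\<close> a.e. on \<open>A\<^sub>m\<close>.
  So \<open>h\<close> vanishes a.e. on \<open>[0,1]\<close> unless it is nowhere essentially bounded.\<close>

lemma open_connected_bounded_eq_Ioo:
  fixes I :: "real set"
  assumes "open I" "connected I" "I \<noteq> {}" "bdd_above I" "bdd_below I"
  shows "I = {Inf I<..<Sup I}"
proof
  show "I \<subseteq> {Inf I<..<Sup I}"
  proof
    fix x assume x: "x \<in> I"
    then obtain e where e: "e > 0" "ball x e \<subseteq> I" using assms(1) open_contains_ball by blast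
    have "x - e/2 \<in> I" "x + e/2 \<in> I" using e by (auto simp: dist_real_def subset_iff)
    then have "Inf I \<le> x - e/2" "x + e/2 \<le> Sup I" using assms(4,5) by (auto intro: cInf_lower cSup_upper)
    then show "x \<in> {Inf I<..<Sup I}" using e by auto
  qed
next
  show "{Inf I<..<Sup I} \<subseteq> I"
  proof
    fix y assume y: "y \<in> {Inf I<..<Sup I}"
    then obtain u where u: "u \<in> I" "u < y" using assms(3,5) by (auto simp: cInf_less_iff)
    obtain v where v: "v \<in> I" "y < v" using y assms(3,4) by (auto simp: less_cSup_iff)
    have "is_interval I" using assms(2) by (simp add: is_interval_connected_1)
    then show "y \<in> I" using u v unfolding is_interval_1 by (meson less_imp_le)
  qed
qed

lemma ennreal_half: "ennreal (x / 2) = ennreal x * inverse 2"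
proof (cases "0 \<le> x")
  case True then show ?thesis using ennreal_mult[of x "1/2"] by simp
next
  case False then show ?thesis by (simp add: ennreal_neg)
qed

lemma emeasure_subset_Icc_finite:
  fixes B :: "real set"
  assumes "B \<subseteq> {a..b}"
  shows "emeasure lborel B < \<infinity>"
proof -
  have "emeasure lborel B \<le> emeasure lborel {a..b}"
    using assms by (intro emeasure_mono) auto
  then show ?thesis
    by (metis emeasure_lborel_Icc_eq ennreal_less_top le_less_trans infinity_ennreal_def)
qed

text \<open>The squeeze behind the main estimate: \<open>\<beta>\<^sub>i\<close> is the coefficient of one \<open>g\<^sub>k\<close> in the
  \<open>i\<close>-th approximant, \<open>t = \<theta>\<^sup>m\<close>, \<open>t' = \<theta>\<^sup>m\<^sup>'\<close> and \<open>\<delta>\<^sub>i\<close> the \<open>L\<^sup>1\<close>-distances.\<close>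
lemma le_of_coefficient_bounds:
  fixes X M \<mu> t t' :: real and \<delta> \<beta> :: "nat \<Rightarrow> real"
  assumes \<delta>: "\<delta> \<longlonglongrightarrow> 0" and pos: "0 < \<mu>" "0 < t'" "0 \<le> t"
    and upper: "\<And>i. X \<le> \<delta> i + \<bar>\<beta> i\<bar> * t"
    and lower: "\<And>i. (\<bar>\<beta> i\<bar> * t' - M) * \<mu> \<le> \<delta> i"
  shows "X \<le> t * M / t'"
proof -
  define Y where "Y i = \<delta> i + ((\<delta> i + M * \<mu>) / (t' * \<mu>)) * t" for i
  have "X \<le> Y i" for i
  proof -
    have "\<bar>\<beta> i\<bar> * (t' * \<mu>) \<le> \<delta> i + M * \<mu>" using lower[of i] by (simp add: algebra_simps)
    then have "\<bar>\<beta> i\<bar> \<le> (\<delta> i + M * \<mu>) / (t' * \<mu>)" using pos by (simp add: pos_le_divide_eq)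
    then have "\<bar>\<beta> i\<bar> * t \<le> ((\<delta> i + M * \<mu>) / (t' * \<mu>)) * t" using pos by (intro mult_right_mono) auto
    then show ?thesis using upper[of i] unfolding Y_def by simp
  qed
  moreover have "Y \<longlonglongrightarrow> 0 + ((0 + M * \<mu>) / (t' * \<mu>)) * t"
    unfolding Y_def[abs_def] using pos by (intro tendsto_intros \<delta>) auto
  moreover have "0 + ((0 + M * \<mu>) / (t' * \<mu>)) * t = t * M / t'" using pos by simp
  ultimately show ?thesis by (metis LIMSEQ_le_const)
qed

section \<open>The space \<open>L\<^sup>1([0,1])\<close>\<close>

lemma integrable_imp_L1: "integrable lborel f \<Longrightarrow> f \<in> L1"
  unfolding L1_def set_integrable_def by (intro CollectI integrable_mult_indicator) auto

lemma L1_set_integrable_subset: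
  "h \<in> L1 \<Longrightarrow> B \<in> sets lborel \<Longrightarrow> B \<subseteq> {0..1} \<Longrightarrow> set_integrable lborel B h"
  unfolding L1_def by (auto intro: set_integrable_subset)

lemma L1_abs_diff: "h \<in> L1 \<Longrightarrow> k \<in> L1 \<Longrightarrow> set_integrable lborel {0..1::real} (\<lambda>x. \<bar>h x - k x\<bar>)"
  by (intro set_integrable_abs set_integral_diff(1)) (auto simp: L1_def)

lemma L1_add_scaled: "h \<in> L1 \<Longrightarrow> k \<in> L1 \<Longrightarrow> (\<lambda>x. h x + c * k x) \<in> L1"
  unfolding L1_def by (auto intro!: set_integral_add(1))

lemma L1dist_nonneg: "0 \<le> L1dist h k"
  unfolding L1dist_def set_lebesgue_integral_def by (intro integral_nonneg_AE) (auto simp: indicator_def)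

lemma L1dist_le:
  assumes "\<And>x. x \<in> {0..1} \<Longrightarrow> \<bar>a x - b x\<bar> \<le> F x"
    and "a \<in> L1" "b \<in> L1" "set_integrable lborel {0..1::real} F"
  shows "L1dist a b \<le> (LINT x:{0..1}|lborel. F x)"
  unfolding L1dist_def
  by (rule set_integral_mono[OF L1_abs_diff[OF assms(2,3)] assms(4) assms(1)])

lemma L1dist_triangle:
  assumes "a \<in> L1" "b \<in> L1" "c \<in> L1"
  shows "L1dist a c \<le> L1dist a b + L1dist b c"
proof -
  have "L1dist a c \<le> (LINT x:{0..1}|lborel. \<bar>a x - b x\<bar> + \<bar>b x - c x\<bar>)"
    using assms by (intro L1dist_le set_integral_add(1) L1_abs_diff) auto
  also have "\<dots> = L1dist a b + L1dist b c"
    unfolding L1dist_def using assms by (intro set_integral_add(2) L1_abs_diff)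
  finally show ?thesis .
qed

lemma L1dist_add_scaled:
  assumes "s \<in> L1" "t \<in> L1" "h1 \<in> L1" "h2 \<in> L1"
  shows "L1dist (\<lambda>x. s x + c * t x) (\<lambda>x. h1 x + c * h2 x) \<le> L1dist s h1 + \<bar>c\<bar> * L1dist t h2"
proof -
  have "L1dist (\<lambda>x. s x + c * t x) (\<lambda>x. h1 x + c * h2 x) \<le>
        (LINT x:{0..1}|lborel. \<bar>s x - h1 x\<bar> + \<bar>c\<bar> * \<bar>t x - h2 x\<bar>)"
  proof (rule L1dist_le)
    fix x :: real
    have "\<bar>s x + c * t x - (h1 x + c * h2 x)\<bar> = \<bar>(s x - h1 x) + c * (t x - h2 x)\<bar>"
      by (simp add: algebra_simps)
    also have "\<dots> \<le> \<bar>s x - h1 x\<bar> + \<bar>c\<bar> * \<bar>t x - h2 x\<bar>"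
      by (simp add: abs_triangle_ineq[THEN order_trans] abs_mult[symmetric])
    finally show "\<bar>s x + c * t x - (h1 x + c * h2 x)\<bar> \<le> \<bar>s x - h1 x\<bar> + \<bar>c\<bar> * \<bar>t x - h2 x\<bar>" .
  qed (use assms L1_add_scaled L1_abs_diff in auto)
  also have "\<dots> = L1dist s h1 + \<bar>c\<bar> * L1dist t h2"
    unfolding L1dist_def using assms
    by (subst set_integral_add(2)) (auto intro: L1_abs_diff)
  finally show ?thesis .
qed

lemma set_integral_abs_diff_le_L1dist:
  assumes "s \<in> L1" "h \<in> L1" "B \<in> sets lborel" "B \<subseteq> {0..1}"
  shows "(LINT x:B|lborel. \<bar>s x - h x\<bar>) \<le> L1dist s h"
proof -
  have int: "set_integrable lborel {0..1} (\<lambda>x. \<bar>s x - h x\<bar>)" using assms(1,2) by (rule L1_abs_diff)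
  then have "set_integrable lborel B (\<lambda>x. \<bar>s x - h x\<bar>)" using assms(3,4) by (rule set_integrable_subset)
  then show ?thesis using int assms(4)
    unfolding L1dist_def set_lebesgue_integral_def set_integrable_def
    by (intro integral_mono) (auto simp: indicator_def)
qed

lemma set_integral_abs_le_L1dist:
  assumes s: "s \<in> L1" and h: "h \<in> L1" and B: "B \<in> sets lborel" "B \<subseteq> {0..1}"
    and bound: "AE x\<in>B in lborel. \<bar>s x\<bar> \<le> K"
  shows "(LINT x:B|lborel. \<bar>h x\<bar>) \<le> L1dist s h + measure lborel B * K"
proof -
  have fin: "emeasure lborel B < \<infinity>" using B(2) by (rule emeasure_subset_Icc_finite)
  have diff: "set_integrable lborel B (\<lambda>x. \<bar>s x - h x\<bar>)"
    using L1_abs_diff[OF s h] B by (rule set_integrable_subset)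
  have const: "set_integrable lborel B (\<lambda>_. K)"
    unfolding set_integrable_def using B(1) fin by (rule integrable_indicator)
  have "(LINT x:B|lborel. \<bar>h x\<bar>) \<le> (LINT x:B|lborel. \<bar>s x - h x\<bar> + K)"
  proof (rule set_integral_mono_AE[OF _ set_integral_add(1)[OF diff const]])
    show "set_integrable lborel B (\<lambda>x. \<bar>h x\<bar>)"
      using L1_set_integrable_subset[OF h B] by (rule set_integrable_abs)
    show "AE x\<in>B in lborel. \<bar>h x\<bar> \<le> \<bar>s x - h x\<bar> + K"
      using bound by eventually_elim auto
  qed
  also have "\<dots> = (LINT x:B|lborel. \<bar>s x - h x\<bar>) + measure lborel B * K"
    using set_integral_const[OF B(1), of K] fin by (simp add: set_integral_add(2)[OF diff const])
  also have "\<dots> \<le> L1dist s h + measure lborel B * K"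
    using set_integral_abs_diff_le_L1dist[OF s h B] by simp
  finally show ?thesis .
qed

lemma L1dist_ge_on_set:
  assumes s: "s \<in> L1" and h: "h \<in> L1" and B: "B \<in> sets lborel" "B \<subseteq> {0..1}"
    and bound: "AE x\<in>B in lborel. K \<le> \<bar>s x - h x\<bar>"
  shows "K * measure lborel B \<le> L1dist s h"
proof -
  have fin: "emeasure lborel B < \<infinity>" using B(2) by (rule emeasure_subset_Icc_finite)
  have "K * measure lborel B = (LINT x:B|lborel. K)"
    using set_integral_const[OF B(1), of K] fin by (simp add: mult.commute)
  also have "\<dots> \<le> (LINT x:B|lborel. \<bar>s x - h x\<bar>)"
  proof (rule set_integral_mono_AE[OF _ _ bound])
    show "set_integrable lborel B (\<lambda>_. K)"
      unfolding set_integrable_def using B(1) fin by (rule integrable_indicator)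
    show "set_integrable lborel B (\<lambda>x. \<bar>s x - h x\<bar>)"
      using L1_abs_diff[OF s h] B by (rule set_integrable_subset)
  qed
  also have "\<dots> \<le> L1dist s h" using s h B by (rule set_integral_abs_diff_le_L1dist)
  finally show ?thesis .
qed

lemma AE_zero_of_set_integral_abs_zero:
  assumes h: "h \<in> L1" and B: "B \<in> sets lborel" "B \<subseteq> {0..1}"
    and zero: "(LINT x:B|lborel. \<bar>h x\<bar>) = 0"
  shows "AE x in lborel. x \<in> B \<longrightarrow> h x = 0"
proof -
  have "set_integrable lborel B (\<lambda>x. \<bar>h x\<bar>)"
    using L1_set_integrable_subset[OF h B] by (rule set_integrable_abs)
  then have "integrable lborel (\<lambda>x. indicator B x * \<bar>h x\<bar>)" unfolding set_integrable_def by simp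
  moreover have "integral\<^sup>L lborel (\<lambda>x. indicator B x * \<bar>h x\<bar>) = 0"
    using zero unfolding set_lebesgue_integral_def by simp
  ultimately have "AE x in lborel. indicator B x * \<bar>h x\<bar> = 0"
    by (subst (asm) integral_nonneg_eq_0_iff_AE) auto
  then show ?thesis by eventually_elim (auto simp: indicator_def)
qed

section \<open>Closed linear spans in \<open>L\<^sup>1([0,1])\<close>\<close>

lemma sum_lessThan_truncated_coeffs:
  "(\<Sum>k<(K::nat). (if k < N then a k else 0) * G k) = (\<Sum>k<min K N. a k * (G k :: real))"
proof (induction K)
  case (Suc K)
  show ?case
  proof (cases "Suc K \<le> N")
    case True then show ?thesis using Suc by (simp add: min_def)
  next
    case False
    then have "min (Suc K) N = N" "min K N = N" by auto
    then show ?thesis using Suc False by simp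
  qed
qed simp

lemma fspan_add_scaled:
  assumes "s \<in> fspan G" "t \<in> fspan G"
  shows "(\<lambda>x. s x + c * t x) \<in> fspan G"
proof -
  obtain N a where s: "s = (\<lambda>x. \<Sum>k<N. a k * G k x)" using assms(1) unfolding fspan_def by blast
  obtain M b where t: "t = (\<lambda>x. \<Sum>k<M. b k * G k x)" using assms(2) unfolding fspan_def by blast
  define e where "e k = (if k < N then a k else 0) + c * (if k < M then b k else 0)" for k
  have "(\<lambda>x. s x + c * t x) = (\<lambda>x. \<Sum>k<max N M. e k * G k x)"
  proof
    fix x
    have "(\<Sum>k<max N M. e k * G k x) = (\<Sum>k<max N M. (if k < N then a k else 0) * G k x)
        + c * (\<Sum>k<max N M. (if k < M then b k else 0) * G k x)"
      unfolding e_def by (simp add: sum.distrib sum_distrib_left algebra_simps)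
    also have "\<dots> = s x + c * t x" unfolding s t sum_lessThan_truncated_coeffs by simp
    finally show "s x + c * t x = (\<Sum>k<max N M. e k * G k x)" by simp
  qed
  then show ?thesis unfolding fspan_def by blast
qed

lemma L1closure_add_scaled:
  assumes h1: "h1 \<in> L1closure (fspan G)" and h2: "h2 \<in> L1closure (fspan G)"
  shows "(\<lambda>x. h1 x + c * h2 x) \<in> L1closure (fspan G)"
proof -
  obtain s where s: "\<And>i. s i \<in> fspan G" "\<And>i. s i \<in> L1" "(\<lambda>i. L1dist (s i) h1) \<longlonglongrightarrow> 0" "h1 \<in> L1"
    using h1 unfolding L1closure_def by blast
  obtain t where t: "\<And>i. t i \<in> fspan G" "\<And>i. t i \<in> L1" "(\<lambda>i. L1dist (t i) h2) \<longlonglongrightarrow> 0" "h2 \<in> L1"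
    using h2 unfolding L1closure_def by blast
  define u where "u i = (\<lambda>x. s i x + c * t i x)" for i
  have u: "u i \<in> fspan G" "u i \<in> L1" for i
    unfolding u_def using s t by (auto intro: fspan_add_scaled L1_add_scaled)
  have "(\<lambda>i. L1dist (s i) h1 + \<bar>c\<bar> * L1dist (t i) h2) \<longlonglongrightarrow> 0 + \<bar>c\<bar> * 0"
    by (intro tendsto_intros s(3) t(3))
  then have lim: "(\<lambda>i. L1dist (s i) h1 + \<bar>c\<bar> * L1dist (t i) h2) \<longlonglongrightarrow> 0" by simp
  have "(\<lambda>i. L1dist (u i) (\<lambda>x. h1 x + c * h2 x)) \<longlonglongrightarrow> 0"
  proof (rule real_tendsto_sandwich[OF _ _ tendsto_const lim])
    show "\<forall>\<^sub>F i in sequentially. 0 \<le> L1dist (u i) (\<lambda>x. h1 x + c * h2 x)"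
      by (simp add: L1dist_nonneg)
    show "\<forall>\<^sub>F i in sequentially. L1dist (u i) (\<lambda>x. h1 x + c * h2 x) \<le> L1dist (s i) h1 + \<bar>c\<bar> * L1dist (t i) h2"
      unfolding u_def using s t by (intro always_eventually allI L1dist_add_scaled) auto
  qed
  moreover have "(\<lambda>x. h1 x + c * h2 x) \<in> L1" using s(4) t(4) by (rule L1_add_scaled)
  ultimately show ?thesis using u unfolding L1closure_def by blast
qed

lemma L1closure_closed:
  assumes h: "h \<in> L1" and s: "\<And>i. s i \<in> L1closure S" and lim: "(\<lambda>i. L1dist (s i) h) \<longlonglongrightarrow> 0"
  shows "h \<in> L1closure S"
proof -
  have "\<exists>u. u \<in> S \<and> u \<in> L1 \<and> L1dist u (s i) < 1 / real (Suc i)" for i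
  proof -
    obtain v where v: "\<And>j. v j \<in> S" "\<And>j. v j \<in> L1" "(\<lambda>j. L1dist (v j) (s i)) \<longlonglongrightarrow> 0"
      using s[of i] unfolding L1closure_def by blast
    obtain j where "norm (L1dist (v j) (s i) - 0) < 1 / real (Suc i)"
      using LIMSEQ_D[OF v(3), of "1 / real (Suc i)"] by auto
    then have "L1dist (v j) (s i) < 1 / real (Suc i)" using L1dist_nonneg[of "v j" "s i"] by auto
    then show ?thesis using v by blast
  qed
  then obtain u where u: "\<And>i. u i \<in> S" "\<And>i. u i \<in> L1" "\<And>i. L1dist (u i) (s i) < 1 / real (Suc i)"
    by metis
  have sL: "s i \<in> L1" for i using s unfolding L1closure_def by blast
  have lim2: "(\<lambda>i. 1 / real (Suc i) + L1dist (s i) h) \<longlonglongrightarrow> 0"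
    using tendsto_add[OF LIMSEQ_inverse_real_of_nat[unfolded inverse_eq_divide] lim] by (simp only: add_0_right)
  have "(\<lambda>i. L1dist (u i) h) \<longlonglongrightarrow> 0"
  proof (rule real_tendsto_sandwich[OF _ _ tendsto_const lim2])
    show "\<forall>\<^sub>F i in sequentially. 0 \<le> L1dist (u i) h" by (simp add: L1dist_nonneg)
    show "\<forall>\<^sub>F i in sequentially. L1dist (u i) h \<le> 1 / real (Suc i) + L1dist (s i) h"
    proof (intro always_eventually allI)
      fix i
      have "L1dist (u i) h \<le> L1dist (u i) (s i) + L1dist (s i) h" using u(2) sL h by (rule L1dist_triangle)
      then show "L1dist (u i) h \<le> 1 / real (Suc i) + L1dist (s i) h" using u(3)[of i] by simp
    qed
  qed
  then show ?thesis using h u unfolding L1closure_def by blast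
qed

section \<open>Rescaled copies of \<open>A\<^sub>1\<close> and their holes\<close>

locale cantor_half =
  fixes A1 :: "real set"
  assumes cantor: "cantor_set A1 0 1" and measure_A1: "measure lborel A1 = 1/2"
begin

abbreviation A1_on :: "real \<Rightarrow> real \<Rightarrow> real set" where
  "A1_on c d \<equiv> rescale A1 c d"

lemma A1_subset: "A1 \<subseteq> {0..1}"
  and A1_endpoints: "0 \<in> A1" "1 \<in> A1"
  and closed_A1: "closed A1"
  and A1_islimpt: "x \<in> A1 \<Longrightarrow> x islimpt A1"
  and interior_A1: "interior A1 = {}"
  using cantor unfolding cantor_set_def by (auto simp: closure_closed)

lemma A1_on_subset: "c < d \<Longrightarrow> A1_on c d \<subseteq> {c..d}"
proof
  fix y assume cd: "c < d" and "y \<in> A1_on c d"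
  then obtain x where x: "x \<in> A1" "y = (d - c) * x + c" unfolding rescale_def by auto
  then have "0 \<le> x" "x \<le> 1" using A1_subset by auto
  then have "0 \<le> (d - c) * x" "(d - c) * x \<le> d - c" using cd by (auto simp: mult_left_le)
  then show "y \<in> {c..d}" using x by auto
qed

lemma A1_on_endpoints: "c \<in> A1_on c d" "d \<in> A1_on c d"
  using A1_endpoints unfolding rescale_def by (force, force)

lemma closed_A1_on: "closed (A1_on c d)"
proof -
  have "compact A1"
    using A1_subset closed_A1 by (meson bounded_subset compact_eq_bounded_closed compact_Icc compact_imp_bounded)
  then have "compact (A1_on c d)" unfolding rescale_def
    by (intro compact_continuous_image continuous_intros)
  then show ?thesis by (rule compact_imp_closed)
qed

lemma A1_on_sets: "A1_on c d \<in> sets lborel"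
  using closed_A1_on by (simp add: borel_closed)

lemma emeasure_A1_on: "c < d \<Longrightarrow> emeasure lborel (A1_on c d) = ennreal ((d - c) / 2)"
proof -
  assume cd: "c < d"
  have "A1 \<in> sets lborel" using closed_A1 by (simp add: borel_closed)
  then have "measure lebesgue ((\<lambda>x. (d - c) *\<^sub>R x + c) ` A1) = \<bar>d - c\<bar> * measure lborel A1"
    using measure_lebesgue_affine[of "d - c" c A1] by (simp add: measure_completion)
  moreover have "measure lebesgue (A1_on c d) = measure lborel (A1_on c d)"
    using A1_on_sets by (simp add: measure_completion)
  ultimately have "measure lborel (A1_on c d) = (d - c) / 2"
    using cd measure_A1 unfolding rescale_def by simp
  moreover have "emeasure lborel (A1_on c d) < \<infinity>"
    using A1_on_subset[OF cd] by (rule emeasure_subset_Icc_finite)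
  then have "emeasure lborel (A1_on c d) = ennreal (measure lborel (A1_on c d))"
    by (intro emeasure_eq_ennreal_measure) (simp add: less_top)
  ultimately show ?thesis by (simp only:)
qed

lemma A1_on_islimpt: "y \<in> A1_on c d \<Longrightarrow> c < d \<Longrightarrow> y islimpt A1_on c d"
proof -
  assume y: "y \<in> A1_on c d" and cd: "c < d"
  then obtain s where s: "s \<in> A1" "y = (d - c) * s + c" unfolding rescale_def by auto
  have sl: "s islimpt A1" using A1_islimpt s(1) .
  show ?thesis unfolding islimpt_approachable
  proof (intro allI impI)
    fix e :: real assume e: "0 < e"
    then have "0 < e / (d - c)" using cd by simp
    then obtain t where t: "t \<in> A1" "t \<noteq> s" "dist t s < e / (d - c)"
      using sl unfolding islimpt_approachable by blast
    have "(d - c) * t + c \<in> A1_on c d" using t(1) unfolding rescale_def by auto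
    moreover have "(d - c) * t + c \<noteq> y" using t(2) s(2) cd by auto
    moreover have "dist ((d - c) * t + c) y < e"
    proof -
      have "dist ((d - c) * t + c) y = (d - c) * dist t s" using s(2) cd
        by (simp add: dist_real_def abs_mult right_diff_distrib[symmetric])
      also have "\<dots> < (d - c) * (e / (d - c))" using t(3) cd by (intro mult_strict_left_mono) auto
      finally show ?thesis using cd by simp
    qed
    ultimately show "\<exists>x'\<in>A1_on c d. x' \<noteq> y \<and> dist x' y < e" by blast
  qed
qed

lemma A1_on_contains_no_interval: "c < d \<Longrightarrow> a < b \<Longrightarrow> \<not> {a<..<b} \<subseteq> A1_on c d"
proof
  assume cd: "c < d" and ab: "a < b" and sub: "{a<..<b} \<subseteq> A1_on c d"
  let ?f = "\<lambda>y. (y - c) / (d - c)"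
  have "{?f a<..<?f b} \<subseteq> A1"
  proof
    fix t assume t: "t \<in> {?f a<..<?f b}"
    have "(d - c) * t + c \<in> {a<..<b}" using t cd by (auto simp: field_simps)
    then have "(d - c) * t + c \<in> A1_on c d" using sub by auto
    then obtain s where "s \<in> A1" "(d - c) * t + c = (d - c) * s + c" unfolding rescale_def by auto
    then show "t \<in> A1" using cd by auto
  qed
  moreover have "?f a < ?f b" using cd ab by (simp add: divide_strict_right_mono)
  ultimately have "{?f a<..<?f b} \<subseteq> interior A1" by (simp add: interior_maximal)
  then show False using interior_A1 \<open>?f a < ?f b\<close> by auto
qed

lemma open_gaps: "open ({c..d} - A1_on c d)"
proof -
  have "{c..d} - A1_on c d = {c<..<d} - A1_on c d"
    using A1_on_endpoints(1)[of c d] A1_on_endpoints(2)[of d c] by (auto simp: less_le)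
  then show ?thesis using closed_A1_on by (simp add: open_Diff)
qed

lemma holeD:
  assumes cd: "c < d" and I: "I \<in> holes (A1_on c d) c d"
  shows "I = {Inf I<..<Sup I}" "c \<le> Inf I" "Inf I < Sup I" "Sup I \<le> d" "I \<inter> A1_on c d = {}"
    "I \<subseteq> {c..d}"
proof -
  have Ic: "I \<in> components ({c..d} - A1_on c d)" using I unfolding holes_def .
  then have sub: "I \<subseteq> {c..d} - A1_on c d" by (rule in_components_subset)
  then show sub2: "I \<subseteq> {c..d}" "I \<inter> A1_on c d = {}" by auto
  have ne: "I \<noteq> {}" using Ic by (rule in_components_nonempty)
  have "open I" using Ic open_gaps open_components by blast
  moreover have "connected I" using Ic by (rule in_components_connected)
  moreover have "bdd_above I" "bdd_below I" using sub2 by (auto intro: bdd_above_mono bdd_below_mono)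
  ultimately show eq: "I = {Inf I<..<Sup I}" using ne open_connected_bounded_eq_Ioo by blast
  from ne obtain x where "x \<in> I" by auto
  then have "x \<in> {Inf I<..<Sup I}" by (subst (asm) eq)
  then show "Inf I < Sup I" by auto
  show "c \<le> Inf I" using ne sub2 by (intro cInf_greatest) auto
  show "Sup I \<le> d" using ne sub2 by (intro cSup_least) auto
qed

lemma mem_hole_iff:
  assumes "c < d" "I \<in> holes (A1_on c d) c d"
  shows "x \<in> I \<longleftrightarrow> Inf I < x \<and> x < Sup I"
proof -
  define l r where "l = Inf I" and "r = Sup I"
  have "I = {l<..<r}" unfolding l_def r_def using holeD(1)[OF assms] .
  then show ?thesis unfolding l_def[symmetric] r_def[symmetric] by simp
qed

lemma hole_subset_Ioo: "c < d \<Longrightarrow> I \<in> holes (A1_on c d) c d \<Longrightarrow> {Inf I<..<Sup I} \<subseteq> {c<..<d}"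
  using holeD(2,4)[of c d I] by auto

lemma countable_holes: "countable (holes (A1_on c d) c d)"
  unfolding holes_def
proof (rule countable_disjoint_open_subsets)
  show "\<And>I. I \<in> components ({c..d} - A1_on c d) \<Longrightarrow> open I"
    using open_gaps open_components by blast
qed (unfold disjnt_def, rule pairwise_disjoint_components)

lemma holes_disjoint:
  "I \<in> holes (A1_on c d) c d \<Longrightarrow> I' \<in> holes (A1_on c d) c d \<Longrightarrow> I \<noteq> I' \<Longrightarrow> I \<inter> I' = {}"
  unfolding holes_def using components_nonoverlap by blast

lemma hole_containing: "x \<in> {c..d} \<Longrightarrow> x \<notin> A1_on c d \<Longrightarrow> \<exists>I\<in>holes (A1_on c d) c d. x \<in> I"
  unfolding holes_def by (metis Diff_iff UnionE Union_components)

lemma hole_exists: "c < d \<Longrightarrow> \<exists>I. I \<in> holes (A1_on c d) c d"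
proof -
  assume cd: "c < d"
  from A1_on_contains_no_interval[OF cd cd] obtain x where "x \<in> {c<..<d}" "x \<notin> A1_on c d" by blast
  then show ?thesis using hole_containing[of x c d] by auto
qed

lemma hole_length_le:
  assumes cd: "c < d" and I: "I \<in> holes (A1_on c d) c d"
  shows "Sup I - Inf I \<le> (d - c) / 2"
proof -
  note h = holeD[OF cd I]
  have "emeasure lborel I \<le> emeasure lborel ({c..d} - A1_on c d)"
    using h(5,6) A1_on_sets by (intro emeasure_mono) auto
  also have "\<dots> = emeasure lborel {c..d} - emeasure lborel (A1_on c d)"
    using A1_on_subset[OF cd] emeasure_A1_on[OF cd] by (intro emeasure_Diff) (auto simp: A1_on_sets[simplified])
  also have "\<dots> = ennreal ((d - c) / 2)"
    using emeasure_A1_on[OF cd] cd by (simp, subst ennreal_minus) (auto simp: field_simps)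
  finally have le: "emeasure lborel I \<le> ennreal ((d - c) / 2)" .
  have "emeasure lborel I = ennreal (Sup I - Inf I)" using h(3) by (subst h(1)) simp
  with le have "ennreal (Sup I - Inf I) \<le> ennreal ((d - c) / 2)" by simp
  then show ?thesis using cd by (simp add: ennreal_le_iff)
qed

lemma hole_inside_or_around:
  assumes cd: "c < d" and ab: "c \<le> a" "a < b" "b \<le> d"
  shows "(\<exists>I\<in>holes (A1_on c d) c d. I \<subseteq> {a<..<b}) \<or> (\<exists>I\<in>holes (A1_on c d) c d. {a<..<b} \<subseteq> I)"
proof (cases "A1_on c d \<inter> {a<..<b} = {}")
  case True
  let ?S = "{c..d} - A1_on c d"
  have mid: "(a+b)/2 \<in> {a<..<b}" using ab by auto
  have "{a<..<b} \<subseteq> ?S" using True ab by auto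
  then have "{a<..<b} \<subseteq> connected_component_set ?S ((a+b)/2)"
    using mid by (intro connected_component_maximal) auto
  moreover have "connected_component_set ?S ((a+b)/2) \<in> components ?S"
    using mid \<open>{a<..<b} \<subseteq> ?S\<close> by (intro componentsI) blast
  ultimately show ?thesis unfolding holes_def by blast
next
  case False
  then obtain y where y: "y \<in> A1_on c d" "a < y" "y < b" by auto
  have "min (y - a) (b - y) > 0" using y by auto
  then obtain z where z: "z \<in> A1_on c d" "z \<noteq> y" "dist z y < min (y - a) (b - y)"
    using A1_on_islimpt[OF y(1) cd] unfolding islimpt_approachable by blast
  then have za: "a < z" "z < b" by (auto simp: dist_real_def)
  define y1 where "y1 = min y z"
  define z1 where "z1 = max y z"
  have y1z1: "y1 < z1" "y1 \<in> A1_on c d" "z1 \<in> A1_on c d" "a < y1" "z1 < b"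
    using z y za unfolding y1_def z1_def by (auto simp: min_def max_def)
  from A1_on_contains_no_interval[OF cd y1z1(1)] obtain x where x: "x \<in> {y1<..<z1}" "x \<notin> A1_on c d"
    by blast
  then have "x \<in> {c..d}" using y1z1 ab by auto
  then obtain I where I: "I \<in> holes (A1_on c d) c d" "x \<in> I" using hole_containing x by blast
  note h = holeD[OF cd I(1)]
  from I(2) have xI: "x \<in> {Inf I<..<Sup I}" by (subst (asm) h(1))
  have "y1 \<le> Inf I"
  proof (rule ccontr)
    assume "\<not> y1 \<le> Inf I"
    then have "y1 \<in> I" using x xI by (subst h(1)) auto
    then show False using h(5) y1z1(2) by auto
  qed
  moreover have "Sup I \<le> z1"
  proof (rule ccontr)
    assume "\<not> Sup I \<le> z1"
    then have "z1 \<in> I" using x xI by (subst h(1)) auto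
    then show False using h(5) y1z1(3) by auto
  qed
  ultimately have "I \<subseteq> {a<..<b}" using y1z1 by (subst h(1)) auto
  then show ?thesis using I by blast
qed

section \<open>The component intervals\<close>

abbreviation comps :: "nat \<Rightarrow> (real \<times> real) set" where
  "comps j \<equiv> comp_intervals A1 j"

lemma comps_Suc_iff: "(c', d') \<in> comps (Suc j) \<longleftrightarrow>
   (\<exists>c d I. (c, d) \<in> comps j \<and> I \<in> holes (A1_on c d) c d \<and> c' = Inf I \<and> d' = Sup I)"
  by auto

lemma comps_bounds: "(c, d) \<in> comps j \<Longrightarrow> 0 \<le> c \<and> c < d \<and> d \<le> 1 \<and> d - c \<le> (1/2)^j"
proof (induction j arbitrary: c d)
  case 0 then show ?case by simp
next
  case (Suc j)
  then obtain c0 d0 I where I: "(c0, d0) \<in> comps j" "I \<in> holes (A1_on c0 d0) c0 d0" "c = Inf I" "d = Sup I"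
    using comps_Suc_iff by blast
  have IH: "0 \<le> c0 \<and> c0 < d0 \<and> d0 \<le> 1 \<and> d0 - c0 \<le> (1/2)^j" using Suc.IH I(1) .
  then have "c0 < d0" by auto
  then show ?case using IH holeD[OF _ I(2)] hole_length_le[OF _ I(2)] I(3,4) by auto
qed

lemma comps_less: "(c, d) \<in> comps j \<Longrightarrow> c < d"
  using comps_bounds by blast

lemma countable_comps: "countable (comps j)"
proof (induction j)
  case 0 then show ?case by simp
next
  case (Suc j)
  have "comps (Suc j) = (\<Union>p\<in>comps j. (\<lambda>I. (Inf I, Sup I)) ` holes (A1_on (fst p) (snd p)) (fst p) (snd p))"
    by force
  then show ?case using Suc.IH countable_holes by (simp add: countable_UN)
qed

lemma comps_disjoint: "(c, d) \<in> comps j \<Longrightarrow> (c', d') \<in> comps j \<Longrightarrow> (c, d) \<noteq> (c', d') \<Longrightarrow>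
  {c<..<d} \<inter> {c'<..<d'} = {}"
proof (induction j arbitrary: c d c' d')
  case 0 then show ?case by simp
next
  case (Suc j)
  obtain c0 d0 I where I: "(c0, d0) \<in> comps j" "I \<in> holes (A1_on c0 d0) c0 d0" "c = Inf I" "d = Sup I"
    using Suc.prems(1) comps_Suc_iff by blast
  obtain c1 d1 I' where I': "(c1, d1) \<in> comps j" "I' \<in> holes (A1_on c1 d1) c1 d1" "c' = Inf I'" "d' = Sup I'"
    using Suc.prems(2) comps_Suc_iff by blast
  have cd0: "c0 < d0" and cd1: "c1 < d1" using comps_less I(1) I'(1) by auto
  have e1: "{c<..<d} = I" using holeD(1)[OF cd0 I(2)] I(3,4) by simp
  have e2: "{c'<..<d'} = I'" using holeD(1)[OF cd1 I'(2)] I'(3,4) by simp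
  show ?case
  proof (cases "(c0, d0) = (c1, d1)")
    case True
    then have "I \<noteq> I'" using Suc.prems(3) I(3,4) I'(3,4) by auto
    then show ?thesis using holes_disjoint I(2) I'(2) True e1 e2 by auto
  next
    case False
    have "{c0<..<d0} \<inter> {c1<..<d1} = {}" using Suc.IH[OF I(1) I'(1) False] .
    moreover have "{c<..<d} \<subseteq> {c0<..<d0}" using hole_subset_Ioo[OF cd0 I(2)] I(3,4) by simp
    moreover have "{c'<..<d'} \<subseteq> {c1<..<d1}" using hole_subset_Ioo[OF cd1 I'(2)] I'(3,4) by simp
    ultimately show ?thesis by blast
  qed
qed

lemma comps_descendant: "(c, d) \<in> comps j \<Longrightarrow> \<exists>c' d'. (c', d') \<in> comps (j + k) \<and> c \<le> c' \<and> d' \<le> d"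
proof (induction k)
  case 0 then show ?case by auto
next
  case (Suc k)
  then obtain c' d' where cd': "(c', d') \<in> comps (j + k)" "c \<le> c'" "d' \<le> d" by blast
  obtain I where I: "I \<in> holes (A1_on c' d') c' d'" using hole_exists comps_less[OF cd'(1)] by blast
  have "(Inf I, Sup I) \<in> comps (j + Suc k)" using cd'(1) I comps_Suc_iff by auto
  then show ?case using holeD[OF comps_less[OF cd'(1)] I] cd' by (intro exI[of _ "Inf I"] exI[of _ "Sup I"]) auto
qed

text \<open>As long as no component interval fits into \<open>[a,b]\<close>, some component interval of every
  level contains \<open>[a,b]\<close>; this is impossible once the level lengths \<open>2\<^sup>-\<^sup>j\<close> drop below \<open>b - a\<close>.\<close>
lemma comps_inside_interval:
  assumes ab: "0 \<le> a" "a < b" "b \<le> 1"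
  shows "\<exists>j c d. (c, d) \<in> comps j \<and> a \<le> c \<and> d \<le> b"
proof (rule ccontr)
  assume none: "\<not> ?thesis"
  have "\<exists>c d. (c, d) \<in> comps l \<and> c \<le> a \<and> b \<le> d" for l
  proof (induction l)
    case 0 then show ?case using ab by auto
  next
    case (Suc l)
    then obtain c d where cd: "(c, d) \<in> comps l" "c \<le> a" "b \<le> d" by blast
    have cd0: "c < d" using comps_less[OF cd(1)] .
    show ?case
    proof (cases "\<exists>I\<in>holes (A1_on c d) c d. I \<subseteq> {a<..<b}")
      case True
      then obtain I where I: "I \<in> holes (A1_on c d) c d" "I \<subseteq> {a<..<b}" by blast
      have "(Inf I, Sup I) \<in> comps (Suc l)" using cd(1) I(1) comps_Suc_iff by blast
      moreover have "{Inf I<..<Sup I} \<subseteq> {a<..<b}" "Inf I < Sup I" using holeD(1,3)[OF cd0 I(1)] I(2) by auto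
      then have "a \<le> Inf I" "Sup I \<le> b" using greaterThanLessThan_subseteq_greaterThanLessThan by blast+
      ultimately show ?thesis using none by blast
    next
      case False
      then obtain I where I: "I \<in> holes (A1_on c d) c d" "{a<..<b} \<subseteq> I"
        using hole_inside_or_around[OF cd0 cd(2) ab(2) cd(3)] by blast
      have "(Inf I, Sup I) \<in> comps (Suc l)" using cd(1) I(1) comps_Suc_iff by blast
      moreover have "{a<..<b} \<subseteq> {Inf I<..<Sup I}" using holeD(1)[OF cd0 I(1)] I(2) by auto
      then have "Inf I \<le> a" "b \<le> Sup I" using greaterThanLessThan_subseteq_greaterThanLessThan ab(2) by blast+
      ultimately show ?thesis by blast
    qed
  qed
  moreover obtain l where l: "(1/2::real)^l < b - a" using real_arch_pow_inv[of "b - a" "1/2"] ab by auto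
  ultimately obtain c d where "(c, d) \<in> comps l" "c \<le> a" "b \<le> d" by blast
  then have "b - a \<le> (1/2)^l" using comps_bounds by fastforce
  then show False using l by simp
qed

section \<open>The sets \<open>A\<^sub>j\<close>\<close>

abbreviation A :: "nat \<Rightarrow> real set" where
  "A m \<equiv> cantor_seq A1 m"

definition covering :: "nat \<Rightarrow> real set" where
  "covering j = (\<Union>(c, d)\<in>comps j. {c..d})"

definition endpoints :: "nat \<Rightarrow> real set" where
  "endpoints j = fst ` comps j \<union> snd ` comps j"

lemma A_Suc: "A (Suc j) = (\<Union>(c, d)\<in>comps j. A1_on c d)"
  unfolding cantor_seq_def by simp

lemma covering_0: "covering 0 = {0..1}"
  unfolding covering_def by simp

lemma endpoints_null: "endpoints j \<in> null_sets lborel"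
  unfolding endpoints_def using countable_comps by (intro countable_imp_null_set_lborel) auto

lemma covering_sets: "covering j \<in> sets lborel"
  unfolding covering_def using countable_comps by (intro sets.countable_UN'') auto

lemma A_sets: "A m \<in> sets lborel"
  unfolding cantor_seq_def using countable_comps A1_on_sets by (intro sets.countable_UN'') auto

text \<open>The intervals of one level overlap only in endpoints, a null set, so measure is additive
  over them.\<close>
lemma emeasure_UN_comps:
  assumes F1: "\<And>p. p \<in> comps j \<Longrightarrow> F p \<subseteq> {fst p..snd p}"
    and F2: "\<And>p. p \<in> comps j \<Longrightarrow> F p \<in> sets lborel"
  shows "emeasure lborel (\<Union>p\<in>comps j. F p) = (\<integral>\<^sup>+p. emeasure lborel (F p) \<partial>count_space (comps j))"
proof -
  let ?N = "endpoints j"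
  have U: "(\<Union>p\<in>comps j. F p) \<in> sets lborel" using countable_comps F2 by (intro sets.countable_UN'') auto
  have "emeasure lborel (\<Union>p\<in>comps j. F p) = emeasure lborel ((\<Union>p\<in>comps j. F p) - ?N)"
    using U endpoints_null by (simp add: emeasure_Diff_null_set)
  also have "(\<Union>p\<in>comps j. F p) - ?N = (\<Union>p\<in>comps j. F p - ?N)" by auto
  also have "emeasure lborel \<dots> = (\<integral>\<^sup>+p. emeasure lborel (F p - ?N) \<partial>count_space (comps j))"
  proof (rule emeasure_UN_countable)
    show "\<And>p. p \<in> comps j \<Longrightarrow> F p - ?N \<in> sets lborel"
      by (intro sets.Diff[OF F2 null_setsD2[OF endpoints_null]])
    show "countable (comps j)" by (rule countable_comps)
    have sub: "F p - ?N \<subseteq> {fst p<..<snd p}" if p: "p \<in> comps j" for p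
      using F1[OF p] p unfolding endpoints_def by (force simp: order.order_iff_strict)
    show "disjoint_family_on (\<lambda>p. F p - ?N) (comps j)"
    proof (unfold disjoint_family_on_def, intro ballI impI)
      fix p q assume p: "p \<in> comps j" and q: "q \<in> comps j" and pq: "p \<noteq> q"
      have "{fst p<..<snd p} \<inter> {fst q<..<snd q} = {}"
        using comps_disjoint[of "fst p" "snd p" j "fst q" "snd q"] p q pq by simp
      then show "(F p - ?N) \<inter> (F q - ?N) = {}" using sub[OF p] sub[OF q] by blast
    qed
  qed
  also have "\<dots> = (\<integral>\<^sup>+p. emeasure lborel (F p) \<partial>count_space (comps j))"
    using F2 endpoints_null by (intro nn_integral_cong) (simp add: emeasure_Diff_null_set)
  finally show ?thesis .
qed

lemma emeasure_A_Suc: "emeasure lborel (A (Suc j)) = emeasure lborel (covering j) * inverse 2"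
proof -
  have "emeasure lborel (A (Suc j)) = (\<integral>\<^sup>+p. emeasure lborel (A1_on (fst p) (snd p)) \<partial>count_space (comps j))"
    unfolding A_Suc case_prod_unfold
    by (rule emeasure_UN_comps) (auto simp: A1_on_sets[simplified] intro!: A1_on_subset comps_less)
  also have "\<dots> = (\<integral>\<^sup>+p. ennreal (snd p - fst p) * inverse 2 \<partial>count_space (comps j))"
    by (intro nn_integral_cong) (simp add: emeasure_A1_on comps_less ennreal_half)
  also have "\<dots> = (\<integral>\<^sup>+p. emeasure lborel {fst p..snd p} \<partial>count_space (comps j)) * inverse 2"
    by (subst nn_integral_multc[symmetric])
       (auto intro!: nn_integral_cong dest!: comps_less)
  also have "(\<integral>\<^sup>+p. emeasure lborel {fst p..snd p} \<partial>count_space (comps j)) = emeasure lborel (covering j)"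
    unfolding covering_def case_prod_unfold by (rule emeasure_UN_comps[symmetric]) simp_all
  finally show ?thesis .
qed

lemma A_Suc_subset_covering: "A (Suc j) \<subseteq> covering j"
  unfolding A_Suc covering_def using A1_on_subset comps_less by blast

lemma covering_Suc_subset: "covering (Suc j) \<subseteq> covering j"
proof
  fix x assume "x \<in> covering (Suc j)"
  then obtain c' d' where cd': "(c', d') \<in> comps (Suc j)" "x \<in> {c'..d'}"
    unfolding covering_def by (auto simp del: comp_intervals.simps)
  then obtain c d I where I: "(c, d) \<in> comps j" "I \<in> holes (A1_on c d) c d" "c' = Inf I" "d' = Sup I"
    using comps_Suc_iff by blast
  have le: "c \<le> c'" "d' \<le> d" using holeD[OF comps_less[OF I(1)] I(2)] I(3,4) by auto
  show "x \<in> covering j" unfolding covering_def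
    by (rule UN_I[of "(c, d)"]) (use I(1) cd'(2) le in auto)
qed

lemma covering_antimono: "j \<le> j' \<Longrightarrow> covering j' \<subseteq> covering j"
  by (induction rule: dec_induct) (use covering_Suc_subset in blast)+

lemma covering_subset_A_Suc_Un: "covering j \<subseteq> A (Suc j) \<union> covering (Suc j)"
proof
  fix x assume "x \<in> covering j"
  then obtain c d where cd: "(c, d) \<in> comps j" "x \<in> {c..d}" unfolding covering_def by auto
  show "x \<in> A (Suc j) \<union> covering (Suc j)"
  proof (cases "x \<in> A1_on c d")
    case True then show ?thesis using cd unfolding A_Suc by auto
  next
    case False
    then obtain I where I: "I \<in> holes (A1_on c d) c d" "x \<in> I" using hole_containing cd(2) by blast
    have "x \<in> {Inf I..Sup I}" using I(2) mem_hole_iff[OF comps_less[OF cd(1)] I(1)] by auto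
    moreover have "(Inf I, Sup I) \<in> comps (Suc j)" using cd(1) I(1) comps_Suc_iff by blast
    ultimately show ?thesis unfolding covering_def by blast
  qed
qed

lemma A_Suc_Int_covering_Suc: "A (Suc j) \<inter> covering (Suc j) \<subseteq> endpoints (Suc j)"
proof
  fix x assume x: "x \<in> A (Suc j) \<inter> covering (Suc j)"
  then obtain c d where cd: "(c, d) \<in> comps j" "x \<in> A1_on c d" unfolding A_Suc by auto
  obtain c' d' where cd': "(c', d') \<in> comps (Suc j)" "x \<in> {c'..d'}"
    using x unfolding covering_def by (auto simp del: comp_intervals.simps)
  show "x \<in> endpoints (Suc j)"
  proof (rule ccontr)
    assume "x \<notin> endpoints (Suc j)"
    then have xo: "c' < x" "x < d'" using cd' unfolding endpoints_def by (force simp: less_le)+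
    obtain c0 d0 I where I: "(c0, d0) \<in> comps j" "I \<in> holes (A1_on c0 d0) c0 d0" "c' = Inf I" "d' = Sup I"
      using cd'(1) comps_Suc_iff by blast
    have cd0: "c0 < d0" using comps_less[OF I(1)] .
    have xI: "x \<in> I" using xo I(3,4) mem_hole_iff[OF cd0 I(2)] by auto
    show False
    proof (cases "(c, d) = (c0, d0)")
      case True
      then show False using holeD(5)[OF cd0 I(2)] xI cd(2) by auto
    next
      case False
      have "{c<..<d} \<inter> {c0<..<d0} = {}" using comps_disjoint[OF cd(1) I(1) False] .
      moreover have "x \<in> {c0<..<d0}" using hole_subset_Ioo[OF cd0 I(2)] xo I(3,4) by auto
      moreover have "x \<in> {c..d}" using A1_on_subset[OF comps_less[OF cd(1)]] cd(2) by auto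
      moreover have "c < d" using comps_less[OF cd(1)] .
      ultimately have "max c c0 < min d d0" by auto
      then have "(max c c0 + min d d0) / 2 \<in> {c<..<d} \<inter> {c0<..<d0}" by auto
      then show False using \<open>{c<..<d} \<inter> {c0<..<d0} = {}\<close> by blast
    qed
  qed
qed

lemma emeasure_covering: "emeasure lborel (covering j) = ennreal ((1/2)^j)"
proof (induction j)
  case 0 then show ?case by (simp add: covering_0)
next
  case (Suc j)
  have null: "A (Suc j) \<inter> covering (Suc j) \<in> null_sets lborel"
    by (rule null_sets_subset[OF endpoints_null sets.Int[OF A_sets covering_sets] A_Suc_Int_covering_Suc])
  have "covering j = A (Suc j) \<union> covering (Suc j)"
    using covering_subset_A_Suc_Un A_Suc_subset_covering covering_Suc_subset by blast
  then have "emeasure lborel (covering j) = emeasure lborel (A (Suc j)) + emeasure lborel (covering (Suc j))"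
    using null A_sets covering_sets by (simp add: emeasure_Un')
  then have "ennreal ((1/2)^j) = ennreal ((1/2)^j / 2) + emeasure lborel (covering (Suc j))"
    using Suc.IH emeasure_A_Suc by (simp only: ennreal_half)
  then have "emeasure lborel (covering (Suc j)) = ennreal ((1/2)^j) - ennreal ((1/2)^j / 2)"
    by (metis add.commute ennreal_add_diff_cancel_right ennreal_neq_top)
  also have "\<dots> = ennreal ((1/2)^Suc j)"
    by (subst ennreal_minus) auto
  finally show ?case .
qed

lemma emeasure_A: "1 \<le> m \<Longrightarrow> emeasure lborel (A m) = ennreal ((1/2)^m)"
proof -
  assume "1 \<le> m"
  then obtain j where m: "m = Suc j" by (cases m) auto
  show ?thesis unfolding m emeasure_A_Suc emeasure_covering by (simp only: ennreal_half[symmetric]) simp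
qed

lemma measure_A: "1 \<le> m \<Longrightarrow> measure lborel (A m) = (1/2)^m"
  using emeasure_A by (simp add: measure_def)

lemma A_subset: "A m \<subseteq> {0..1}"
proof -
  have "A m = A (Suc (m - 1))" unfolding cantor_seq_def by simp
  also have "\<dots> \<subseteq> covering (m - 1)" by (rule A_Suc_subset_covering)
  also have "\<dots> \<subseteq> covering 0" by (rule covering_antimono) simp
  finally show ?thesis by (simp add: covering_0)
qed

definition all_endpoints :: "real set" where
  "all_endpoints = (\<Union>j. endpoints j)"

lemma all_endpoints_null: "all_endpoints \<in> null_sets lborel"
  unfolding all_endpoints_def endpoints_def using countable_comps
  by (intro countable_imp_null_set_lborel) auto

lemma A_disjoint:
  assumes "x \<notin> all_endpoints" "x \<in> A m" "x \<in> A m'" "1 \<le> m" "1 \<le> m'"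
  shows "m = m'"
proof -
  have less: False if "x \<in> A (Suc j)" "x \<in> A (Suc j')" "j < j'" for j j'
  proof -
    have "x \<in> covering (Suc j)"
      using that(2,3) A_Suc_subset_covering[of j'] covering_antimono[of "Suc j" j'] by auto
    then show False
      using A_Suc_Int_covering_Suc that(1) assms(1) unfolding all_endpoints_def by blast
  qed
  obtain j where j: "m = Suc j" using assms(4) by (cases m) auto
  obtain j' where j': "m' = Suc j'" using assms(5) by (cases m') auto
  show ?thesis using less[of j j'] less[of j' j] assms(2,3) unfolding j j'
    by (cases j j' rule: linorder_cases) auto
qed

lemma covering_or_A: "x \<in> {0..1} \<Longrightarrow> x \<in> covering l \<or> (\<exists>m. 1 \<le> m \<and> x \<in> A m)"
proof (induction l)
  case 0 then show ?case by (simp add: covering_0)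
next
  case (Suc l)
  from Suc.IH[OF Suc.prems] show ?case
  proof
    assume "x \<in> covering l"
    then have "x \<in> A (Suc l) \<or> x \<in> covering (Suc l)" using covering_subset_A_Suc_Un by blast
    then show ?case by (metis le_add1 plus_1_eq_Suc)
  qed blast
qed

lemma Inter_covering_null: "(\<Inter>l. covering l) \<in> null_sets lborel"
proof -
  have "emeasure lborel (\<Inter>l. covering l) \<le> ennreal ((1/2)^l)" for l
    using emeasure_mono[of "\<Inter>l. covering l" "covering l" lborel] covering_sets emeasure_covering by auto
  moreover have "(\<lambda>l. ennreal ((1/2::real)^l)) \<longlonglongrightarrow> ennreal 0"
    by (intro tendsto_ennrealI LIMSEQ_power_zero) auto
  ultimately have "emeasure lborel (\<Inter>l. covering l) \<le> 0"
    by (intro LIMSEQ_le_const) (auto intro: always_eventually)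
  then show ?thesis using covering_sets by (auto simp: null_sets_def)
qed

lemma measure_A_Int_interval_pos:
  assumes ab: "0 \<le> a" "a < b" "b \<le> 1"
  obtains L where "\<And>m. m \<ge> L \<Longrightarrow> 0 < measure lborel (A m \<inter> {a..b})"
proof -
  obtain j c d where cd: "(c, d) \<in> comps j" "a \<le> c" "d \<le> b" using comps_inside_interval[OF ab] by blast
  have "0 < measure lborel (A m \<inter> {a..b})" if m: "m \<ge> Suc j" for m
  proof -
    obtain c' d' where cd': "(c', d') \<in> comps (j + (m - 1 - j))" "c \<le> c'" "d' \<le> d"
      using comps_descendant[OF cd(1)] by blast
    then have p: "(c', d') \<in> comps (m - 1)" using m by (simp add: add_diff_inverse_nat)
    have cdl: "c' < d'" using comps_less[OF p] .
    have sub: "A1_on c' d' \<subseteq> A m \<inter> {a..b}"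
      using p A1_on_subset[OF cdl] cd cd' unfolding cantor_seq_def by force
    have fin: "emeasure lborel (A m \<inter> {a..b}) < \<infinity>"
      by (rule emeasure_subset_Icc_finite[of _ a b]) auto
    have "emeasure lborel (A1_on c' d') \<le> emeasure lborel (A m \<inter> {a..b})"
      using A_sets by (intro emeasure_mono[OF sub]) auto
    then have "ennreal ((d' - c') / 2) \<le> emeasure lborel (A m \<inter> {a..b})"
      using emeasure_A1_on[OF cdl] by simp
    also have "\<dots> = ennreal (measure lborel (A m \<inter> {a..b}))"
      using fin by (intro emeasure_eq_ennreal_measure) (simp add: less_top)
    finally have "(d' - c') / 2 \<le> measure lborel (A m \<inter> {a..b})"
      by (simp add: ennreal_le_iff)
    then show ?thesis using cdl by simp
  qed
  then show ?thesis using that by blast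
qed

end

section \<open>The functions \<open>g\<^sub>k\<close> and their closed span\<close>

locale cantor_series = cantor_half +
  fixes \<theta> :: real and n :: "nat \<Rightarrow> nat \<Rightarrow> nat"
  assumes theta_gt_1: "1 < \<theta>" and theta_lt_2: "\<theta> < 2"
    and strict_mono_n: "\<And>k. strict_mono (n k)"
    and n_ge_1: "\<And>k j. 1 \<le> n k j"
    and n_disjoint: "\<And>k k'. k \<noteq> k' \<Longrightarrow> range (n k) \<inter> range (n k') = {}"
begin

abbreviation g :: "nat \<Rightarrow> real \<Rightarrow> real" where
  "g k \<equiv> gfun \<theta> A1 (n k)"

lemma fseq_sums_on_A:
  assumes x: "x \<notin> all_endpoints" "x \<in> A m" "1 \<le> m"
  shows "(\<lambda>j. fseq \<theta> A1 (n k j) x) sums (if m \<in> range (n k) then \<theta>^m else 0)"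
proof -
  have other: "fseq \<theta> A1 (n k j) x = 0" if "n k j \<noteq> m" for j
  proof -
    have "x \<notin> A (n k j)" using A_disjoint[OF x(1) _ x(2) n_ge_1 x(3)] that by blast
    then show ?thesis by (simp add: fseq_def)
  qed
  show ?thesis
  proof (cases "m \<in> range (n k)")
    case True
    then obtain j0 where j0: "n k j0 = m" by auto
    have inj: "inj (n k)" using strict_mono_n strict_mono_imp_inj_on by blast
    have "(\<lambda>j. fseq \<theta> A1 (n k j) x) = (\<lambda>j. if j = j0 then \<theta>^m else 0)"
    proof
      fix j
      show "fseq \<theta> A1 (n k j) x = (if j = j0 then \<theta>^m else 0)"
      proof (cases "j = j0")
        case True then show ?thesis using j0 x(2) by (simp add: fseq_def)
      next
        case False
        then have "n k j \<noteq> m" using j0 inj by (auto dest: injD)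
        then show ?thesis using other False by simp
      qed
    qed
    then show ?thesis using True sums_single[of j0 "\<lambda>_. \<theta>^m"] by simp
  next
    case False
    then have "n k j \<noteq> m" for j by auto
    then have "(\<lambda>j. fseq \<theta> A1 (n k j) x) = (\<lambda>j. 0)" using other by simp
    then show ?thesis using False by simp
  qed
qed

lemma fseq_summable: "x \<notin> all_endpoints \<Longrightarrow> summable (\<lambda>j. fseq \<theta> A1 (n k j) x)"
proof (cases "\<exists>m. 1 \<le> m \<and> x \<in> A m")
  case True
  moreover assume "x \<notin> all_endpoints"
  ultimately show ?thesis using fseq_sums_on_A sums_summable by blast
next
  case False
  then have "(\<lambda>j. fseq \<theta> A1 (n k j) x) = (\<lambda>j. 0)" using n_ge_1 by (auto simp: fseq_def)
  then show ?thesis by simp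
qed

lemma g_on_A:
  assumes "x \<notin> all_endpoints" "x \<in> A m" "1 \<le> m"
  shows "g k x = (if m \<in> range (n k) then \<theta>^m else 0)"
  using fseq_sums_on_A[OF assms, of k] unfolding gfun_def by (simp add: sums_iff)

lemma fseq_measurable: "fseq \<theta> A1 m \<in> borel_measurable lborel"
proof -
  note [measurable] = A_sets[of m]
  show ?thesis unfolding fseq_def by measurable
qed

lemma gfun_measurable: "gfun \<theta> A1 nn \<in> borel_measurable lborel"
proof -
  note [measurable] = fseq_measurable
  have "Measurable.pred lborel (\<lambda>x. Cauchy (\<lambda>N. \<Sum>i<N. fseq \<theta> A1 (nn i) x))" by measurable
  then have [measurable]: "Measurable.pred lborel (\<lambda>x. summable (\<lambda>i. fseq \<theta> A1 (nn i) x))"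
    unfolding summable_iff_convergent Cauchy_convergent_iff .
  show ?thesis unfolding gfun_def by measurable
qed

lemma g_integrable: "integrable lborel (g k)"
proof -
  let ?f = "\<lambda>j x. fseq \<theta> A1 (n k j) x"
  have fin: "emeasure lborel (A m) < \<infinity>" for m
    using A_subset by (rule emeasure_subset_Icc_finite)
  have f_int: "integrable lborel (?f j)" for j
    using fin A_sets unfolding fseq_def by simp
  have f_norm: "(\<integral>x. norm (?f j x) \<partial>lborel) = (\<theta>/2)^(n k j)" for j
  proof -
    have "(\<lambda>x. norm (?f j x)) = (\<lambda>x. \<theta>^(n k j) * indicator (A (n k j)) x)"
      using theta_gt_1 by (auto simp: fseq_def fun_eq_iff)
    then show ?thesis using measure_A[OF n_ge_1] by (simp add: power_divide)
  qed
  have norms_summable: "summable (\<lambda>j. (\<integral>x. norm (?f j x) \<partial>lborel))"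
  proof (rule summable_comparison_test'[where N=0])
    show "summable (\<lambda>j. (\<theta>/2)^j)" using theta_gt_1 theta_lt_2 by (intro summable_geometric) simp
    fix j
    have "j \<le> n k j" using strict_mono_n seq_suble by blast
    then show "norm (\<integral>x. norm (?f j x) \<partial>lborel) \<le> (\<theta>/2)^j"
      unfolding f_norm using theta_gt_1 theta_lt_2 by (simp add: power_decreasing)
  qed
  have off_endpoints: "AE x in lborel. x \<notin> all_endpoints"
    using all_endpoints_null by (rule AE_not_in)
  then have "AE x in lborel. summable (\<lambda>j. norm (?f j x))"
    by eventually_elim (use theta_gt_1 fseq_summable in \<open>simp add: fseq_def\<close>)
  then have "integrable lborel (\<lambda>x. \<Sum>j. ?f j x)"
    by (rule integrable_suminf[OF f_int _ norms_summable])
  moreover have "AE x in lborel. (\<Sum>j. ?f j x) = g k x"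
    using off_endpoints by eventually_elim (simp add: gfun_def fseq_summable)
  ultimately show ?thesis by (rule integrable_cong_AE_imp[OF _ gfun_measurable])
qed

lemma span_integrable: "integrable lborel (\<lambda>x. \<Sum>k<N. c k * g k x)"
  using g_integrable by auto

lemma AE_span_on_A:
  assumes m: "1 \<le> m" "m \<in> range (n k)"
  shows "AE x in lborel. x \<in> A m \<longrightarrow> (\<Sum>k'<N. c k' * g k' x) = (if k < N then c k else 0) * \<theta>^m"
  using AE_not_in[OF all_endpoints_null]
proof eventually_elim
  case (elim x)
  show ?case
  proof
    assume x: "x \<in> A m"
    have "(\<Sum>k'<N. c k' * g k' x) = (\<Sum>k'<N. if k' = k then c k * \<theta>^m else 0)"
    proof (rule sum.cong[OF refl])
      fix k'
      have "m \<notin> range (n k')" if "k' \<noteq> k" using n_disjoint[OF that] m(2) by blast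
      then show "c k' * g k' x = (if k' = k then c k * \<theta>^m else 0)"
        using g_on_A[OF elim x m(1)] m(2) by auto
    qed
    then show "(\<Sum>k'<N. c k' * g k' x) = (if k < N then c k else 0) * \<theta>^m"
      by (simp add: sum.delta)
  qed
qed

lemma AE_span_on_A_zero:
  assumes "1 \<le> m" "\<And>k. m \<notin> range (n k)"
  shows "AE x in lborel. x \<in> A m \<longrightarrow> (\<Sum>k<N. c k * g k x) = 0"
  using AE_not_in[OF all_endpoints_null] by eventually_elim (use g_on_A assms in auto)

lemma span_coeffs_zero:
  assumes zero: "L1zero (\<lambda>x. \<Sum>k<N. c k * g k x)" and k: "k < N"
  shows "c k = 0"
proof (rule ccontr)
  assume ne: "c k \<noteq> 0"
  define m where "m = n k 0"
  have m: "1 \<le> m" "m \<in> range (n k)" unfolding m_def using n_ge_1 by auto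
  have "AE x in lborel. x \<notin> A m"
    using zero[unfolded L1zero_def] AE_span_on_A[OF m, where N=N and c=c]
    by eventually_elim (use A_subset[of m] ne k theta_gt_1 in auto)
  then have "emeasure lborel (A m) = 0"
    using AE_iff_measurable[OF A_sets[of m], of "\<lambda>x. x \<notin> A m"] by auto
  then show False using emeasure_A[OF m(1)] by simp
qed

lemma set_integral_abs_on_A_le:
  assumes h: "h \<in> L1"
    and s: "\<And>i. s i = (\<lambda>x. \<Sum>k<N i. c i k * g k x)"
    and lim: "(\<lambda>i. L1dist (s i) h) \<longlonglongrightarrow> 0"
    and M: "AE x in lborel. x \<in> {a..b} \<longrightarrow> \<bar>h x\<bar> \<le> M"
    and m: "1 \<le> m" "m \<in> range (n k)"
    and pos: "0 < measure lborel (A (n k j) \<inter> {a..b})"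
  shows "(LINT x:A m|lborel. \<bar>h x\<bar>) \<le> \<theta>^m * M / \<theta>^(n k j)"
proof -
  let ?B = "A (n k j) \<inter> {a..b}"
  define \<beta> where "\<beta> i = (if k < N i then c i k else 0)" for i
  have sL: "s i \<in> L1" for i unfolding s by (rule integrable_imp_L1[OF span_integrable])
  have s_on_A: "AE x\<in>A m' in lborel. s i x = \<beta> i * \<theta>^m'" if "1 \<le> m'" "m' \<in> range (n k)" for i m'
    using AE_span_on_A[OF that, where N="N i" and c="c i"] unfolding s \<beta>_def .
  show ?thesis
  proof (rule le_of_coefficient_bounds[OF lim pos])
    show "0 < \<theta>^(n k j)" "0 \<le> \<theta>^m" using theta_gt_1 by auto
  next
    fix i
    have "AE x\<in>A m in lborel. \<bar>s i x\<bar> \<le> \<bar>\<beta> i\<bar> * \<theta>^m"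
      using s_on_A[OF m, of i] by eventually_elim (use theta_gt_1 in \<open>auto simp: abs_mult\<close>)
    then have "(LINT x:A m|lborel. \<bar>h x\<bar>) \<le> L1dist (s i) h + measure lborel (A m) * (\<bar>\<beta> i\<bar> * \<theta>^m)"
      by (rule set_integral_abs_le_L1dist[OF sL h A_sets A_subset])
    moreover have "measure lborel (A m) * (\<bar>\<beta> i\<bar> * \<theta>^m) \<le> \<bar>\<beta> i\<bar> * \<theta>^m"
      using measure_A[OF m(1)] theta_gt_1 by (intro mult_left_le_one_le) (auto simp: power_le_one)
    ultimately show "(LINT x:A m|lborel. \<bar>h x\<bar>) \<le> L1dist (s i) h + \<bar>\<beta> i\<bar> * \<theta>^m" by linarith
  next
    fix i
    have "AE x\<in>?B in lborel. \<bar>\<beta> i\<bar> * \<theta>^(n k j) - M \<le> \<bar>s i x - h x\<bar>"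
      using s_on_A[where i=i and m'="n k j", OF n_ge_1 rangeI] M
      by eventually_elim (use theta_gt_1 in \<open>auto simp: abs_mult\<close>)
    then show "(\<bar>\<beta> i\<bar> * \<theta>^(n k j) - M) * measure lborel ?B \<le> L1dist (s i) h"
      using A_sets A_subset by (intro L1dist_ge_on_set[OF sL h]) auto
  qed
qed

lemma set_integral_abs_on_A_eq_0:
  assumes h: "h \<in> L1"
    and s: "\<And>i. s i = (\<lambda>x. \<Sum>k<N i. c i k * g k x)"
    and lim: "(\<lambda>i. L1dist (s i) h) \<longlonglongrightarrow> 0"
    and ab: "0 \<le> a" "a < b" "b \<le> 1"
    and M: "AE x in lborel. x \<in> {a..b} \<longrightarrow> \<bar>h x\<bar> \<le> M"
    and m: "1 \<le> m"
  shows "(LINT x:A m|lborel. \<bar>h x\<bar>) = 0"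
proof -
  define X where "X = (LINT x:A m|lborel. \<bar>h x\<bar>)"
  have "0 \<le> X" unfolding X_def set_lebesgue_integral_def
    by (intro integral_nonneg_AE) (auto simp: indicator_def)
  moreover have "X \<le> 0"
  proof (cases "\<exists>k. m \<in> range (n k)")
    case False
    have "X \<le> L1dist (s i) h" for i
    proof -
      have sL: "s i \<in> L1" unfolding s by (rule integrable_imp_L1[OF span_integrable])
      have "\<And>k. m \<notin> range (n k)" using False by blast
      from AE_span_on_A_zero[OF m this, where N="N i" and c="c i"]
      have "AE x\<in>A m in lborel. \<bar>s i x\<bar> \<le> 0" unfolding s by eventually_elim simp
      from set_integral_abs_le_L1dist[OF sL h A_sets A_subset this] show ?thesis
        unfolding X_def by simp
    qed
    then show ?thesis by (intro LIMSEQ_le_const[OF lim]) auto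
  next
    case True
    then obtain k where mk: "m \<in> range (n k)" by blast
    obtain L where L: "\<And>m'. m' \<ge> L \<Longrightarrow> 0 < measure lborel (A m' \<inter> {a..b})"
      using measure_A_Int_interval_pos[OF ab] by blast
    have "X \<le> \<theta>^m * M / \<theta>^(n k j)" if "j \<ge> L" for j
    proof -
      have "j \<le> n k j" using strict_mono_n seq_suble by blast
      then show ?thesis unfolding X_def
        using L that by (intro set_integral_abs_on_A_le[OF h s lim M m mk]) simp
    qed
    moreover have "(\<lambda>j. \<theta>^m * M / \<theta>^(n k j)) \<longlonglongrightarrow> 0"
    proof -
      have "(\<lambda>j. \<theta>^m * M * ((\<lambda>j. (1/\<theta>)^j) \<circ> n k) j) \<longlonglongrightarrow> \<theta>^m * M * 0"
        using theta_gt_1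
        by (intro tendsto_intros LIMSEQ_subseq_LIMSEQ[OF _ strict_mono_n] LIMSEQ_power_zero) auto
      then show ?thesis by (simp add: power_one_over divide_inverse power_inverse)
    qed
    ultimately show ?thesis by (intro LIMSEQ_le_const) auto
  qed
  ultimately show ?thesis unfolding X_def by simp
qed

lemma L1closure_span_zero_or_G:
  assumes h: "h \<in> L1closure (fspan g)"
  shows "L1zero h \<or> h \<in> Gset"
proof (rule disjCI)
  assume "h \<notin> Gset"
  obtain s where s: "\<And>i. s i \<in> fspan g" and lim: "(\<lambda>i. L1dist (s i) h) \<longlonglongrightarrow> 0" and hL: "h \<in> L1"
    using h unfolding L1closure_def by blast
  obtain a b M where ab: "0 \<le> a" "a < b" "b \<le> 1"
    and M: "AE x in lborel. x \<in> {a..b} \<longrightarrow> \<bar>h x\<bar> \<le> M"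
    using \<open>h \<notin> Gset\<close> hL unfolding Gset_def ess_bounded_on_def by blast
  have "\<forall>i. \<exists>N c. s i = (\<lambda>x. \<Sum>k<N. c k * g k x)" using s unfolding fspan_def by blast
  then obtain N c where "\<forall>i. s i = (\<lambda>x. \<Sum>k<N i. c i k * g k x)" unfolding choice_iff by blast
  then have "AE x in lborel. x \<in> A m \<longrightarrow> h x = 0" if "1 \<le> m" for m
    using set_integral_abs_on_A_eq_0[OF hL _ lim ab M that] hL A_sets A_subset
    by (intro AE_zero_of_set_integral_abs_zero) auto
  then have "AE x in lborel. \<forall>m. 1 \<le> m \<longrightarrow> x \<in> A m \<longrightarrow> h x = 0"
    by (subst AE_all_countable) auto
  moreover have "AE x in lborel. x \<notin> (\<Inter>l. covering l)"
    using Inter_covering_null by (rule AE_not_in)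
  ultimately show "L1zero h" unfolding L1zero_def
  proof eventually_elim
    case (elim x)
    show ?case
    proof
      assume "x \<in> {0..1}"
      moreover obtain l where "x \<notin> covering l" using elim(2) by blast
      ultimately obtain m where "1 \<le> m" "x \<in> A m" using covering_or_A by blast
      then show "h x = 0" using elim(1) by blast
    qed
  qed
qed

end

theorem mainTheorem1:
  fixes \<theta> :: real and A1 :: "real set" and n :: "nat \<Rightarrow> nat \<Rightarrow> nat"
  assumes "1 < \<theta>" "\<theta> < 2"
    and "cantor_set A1 0 1" "measure lborel A1 = 1 / 2"
    and "\<And>k. strict_mono (n k)"
    and "\<And>k j. 1 \<le> n k j"
    and "\<And>k k'. k \<noteq> k' \<Longrightarrow> range (n k) \<inter> range (n k') = {}"
  defines "g \<equiv> (\<lambda>k. gfun \<theta> A1 (n k))"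
  shows "(\<forall>k. g k \<in> L1)
    \<and> (\<forall>h1\<in>L1closure (fspan g). \<forall>h2\<in>L1closure (fspan g). \<forall>c::real.
          (\<lambda>x. h1 x + c * h2 x) \<in> L1closure (fspan g))
    \<and> (\<forall>h s. h \<in> L1 \<and> (\<forall>i. s i \<in> L1closure (fspan g)) \<and> (\<lambda>i. L1dist (s i) h) \<longlonglongrightarrow> 0
          \<longrightarrow> h \<in> L1closure (fspan g))
    \<and> (\<forall>N c. L1zero (\<lambda>x. \<Sum>k<N. c k * g k x) \<longrightarrow> (\<forall>k<N. c k = 0))
    \<and> (\<forall>h\<in>L1closure (fspan g). L1zero h \<or> h \<in> Gset)"
proof -
  interpret cantor_series A1 \<theta> n
    by unfold_locales (fact assms)+
  show ?thesis unfolding g_def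
  proof (intro conjI)
    show "\<forall>k. gfun \<theta> A1 (n k) \<in> L1" using g_integrable integrable_imp_L1 by blast
  qed (use L1closure_add_scaled L1closure_closed span_coeffs_zero L1closure_span_zero_or_G in blast)+
qed

end
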